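(* Let $(\Omega,\mathcal{F},\mathbb{P},\theta,\varphi)$ be a discrete-time random dynamical system on a separable Hilbert space $\mathcal{H}$. Assume there exist a $\varphi$-invariant random point $A(\omega)$, some $\mu>0$ and measurable functions $0<\alpha(\omega)<\beta(\omega)<1$ such that the set $$U(\omega)=\Big\{x_0\in\bar B(A(\omega),\alpha(\omega)):\ \exists (x_n)_{n\in\mathbb{N}}\text{ with }\varphi_1(\theta_{-n}\omega,x_n)=x_{n-1}\text{ and }\|x_n-A(\theta_{-n}\omega)\|\le\beta(\omega)e^{-\mu n}\text{ for all }n\ge0\Big\}$$ consists of more than one point for $\mathbb{P}$-almost every $\omega$. Assume further that there exists some $x_0(\omega)\in U(\omega)\setminus A(\omega)$ such that the corresponding points $x_n(\omega)$, $n\ge 0$, chosen as in the definition of $U(\omega)$, are random points. Then $\varphi$ does not synchronize.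
   Context: $(\Omega,\mathcal{F},\mathbb{P},\theta)$ is a metric dynamical system: $(\Omega,\mathcal{F},\mathbb{P})$ is a probability space and $(\theta_n)_{n\in\mathbb{Z}}$ is a group of measurable maps with $\theta_0=\mathrm{id}$ leaving $\mathbb{P}$ invariant. A random dynamical system is a jointly measurable map $\varphi:\mathbb{N}_0\times\Omega\times\mathcal{H}\to\mathcal{H}$ with $\varphi_0(\omega,x)=x$, $\varphi_{s+t}(\omega,x)=\varphi_t(\theta_s\omega,\varphi_s(\omega,x))$ and $x\mapsto\varphi_t(\omega,x)$ continuous; it is assumed that there is a family of sub-$\sigma$-algebras $(\mathcal{F}_{s,t})_{s\le t}$ with $\theta_r^{-1}(\mathcal{F}_{s,t})=\mathcal{F}_{s+r,t+r}$, $\mathcal{F}_{t,u}\subset\mathcal{F}_{s,v}$ for $s\le t\le u\le v$, and $\varphi_t(\cdot,x)$ $\mathcal{F}_{0,t}$-measurable. A family $\{A(\omega)\}_{\omega\in\Omega}$ of non-empty subsets of $\mathcal{H}$ is a random point (resp. random compact set) if it is $\mathbb{P}$-a.s. a single point (resp. compact set) and $\omega\mapsto\inf_{a\in A(\omega)}\|x-a\|$ is $\mathcal{F}$-measurable for each $x\in\mathcal{H}$; it is $\varphi$-invariant if $\varphi_t(\omega,A(\omega))=A(\theta_t\omega)$ for all $t\ge0$ and almost all $\omega$. A random compact set $A$ is a weak attractor if it is $\varphi$-invariant and for every compact $B\subset\mathcal{H}$, $\sup_{x\in B}\inf_{a\in A(\omega)}\|\varphi_t(\theta_{-t}\omega,x)-a\|\to0$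 in probability as $t\to\infty$. Synchronization occurs if there is a weak attractor $A(\omega)$ which is a singleton for $\mathbb{P}$-almost every $\omega$. $\bar B(x,r)$ is the closed ball of radius $r$ about $x$. *)

theory Defs
  imports "HOL-Probability.Probability"
begin

definition metric_dynamical_system :: "'w measure \<Rightarrow> (int \<Rightarrow> 'w \<Rightarrow> 'w) \<Rightarrow> bool" where
  "metric_dynamical_system M \<theta> \<longleftrightarrow>
     prob_space M \<and>
     (\<forall>n. \<theta> n \<in> measurable M M \<and> distr M M (\<theta> n) = M) \<and>
     (\<forall>\<omega>\<in>space M. \<theta> 0 \<omega> = \<omega>) \<and>
     (\<forall>s t. \<forall>\<omega>\<in>space M. \<theta> (s + t) \<omega> = \<theta> s (\<theta> t \<omega>))"

definition rds ::
  "'w measure \<Rightarrow> (int \<Rightarrow> 'w \<Rightarrow> 'w) \<Rightarrow> (int \<Rightarrow> int \<Rightarrow> 'w measure)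
     \<Rightarrow> (nat \<Rightarrow> 'w \<Rightarrow> 'h::{real_inner, banach, second_countable_topology} \<Rightarrow> 'h) \<Rightarrow> bool" where
  "rds M \<theta> F \<phi> \<longleftrightarrow>
     metric_dynamical_system M \<theta> \<and>
     (\<forall>t. (\<lambda>(\<omega>, x). \<phi> t \<omega> x) \<in> borel_measurable (M \<Otimes>\<^sub>M borel)) \<and>
     (\<forall>\<omega>\<in>space M. \<forall>x. \<phi> 0 \<omega> x = x) \<and>
     (\<forall>s t. \<forall>\<omega>\<in>space M. \<forall>x. \<phi> (s + t) \<omega> x = \<phi> t (\<theta> (int s) \<omega>) (\<phi> s \<omega> x)) \<and>
     (\<forall>t. \<forall>\<omega>\<in>space M. continuous_on UNIV (\<phi> t \<omega>)) \<and>
     (\<forall>s t. s \<le> t \<longrightarrow> subalgebra M (F s t)) \<and>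
     (\<forall>r s t. s \<le> t \<longrightarrow>
        {\<theta> r -` S \<inter> space M | S. S \<in> sets (F s t)} = sets (F (s + r) (t + r))) \<and>
     (\<forall>s t u v. s \<le> t \<and> t \<le> u \<and> u \<le> v \<longrightarrow> sets (F t u) \<subseteq> sets (F s v)) \<and>
     (\<forall>t x. (\<lambda>\<omega>. \<phi> t \<omega> x) \<in> borel_measurable (F 0 (int t)))"

definition random_point :: "'w measure \<Rightarrow> ('w \<Rightarrow> 'h::metric_space set) \<Rightarrow> bool" where
  "random_point M A \<longleftrightarrow>
     (\<forall>\<omega>\<in>space M. A \<omega> \<noteq> {}) \<and>
     (AE \<omega> in M. \<exists>a. A \<omega> = {a}) \<and>
     (\<forall>x. (\<lambda>\<omega>. infdist x (A \<omega>)) \<in> borel_measurable M)"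

definition random_compact_set :: "'w measure \<Rightarrow> ('w \<Rightarrow> 'h::metric_space set) \<Rightarrow> bool" where
  "random_compact_set M A \<longleftrightarrow>
     (\<forall>\<omega>\<in>space M. A \<omega> \<noteq> {}) \<and>
     (AE \<omega> in M. compact (A \<omega>)) \<and>
     (\<forall>x. (\<lambda>\<omega>. infdist x (A \<omega>)) \<in> borel_measurable M)"

definition invariant_set ::
  "'w measure \<Rightarrow> (int \<Rightarrow> 'w \<Rightarrow> 'w) \<Rightarrow> (nat \<Rightarrow> 'w \<Rightarrow> 'h \<Rightarrow> 'h) \<Rightarrow> ('w \<Rightarrow> 'h set) \<Rightarrow> bool" where
  "invariant_set M \<theta> \<phi> A \<longleftrightarrow> (\<forall>t. AE \<omega> in M. \<phi> t \<omega> ` A \<omega> = A (\<theta> (int t) \<omega>))"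

definition weak_attractor ::
  "'w measure \<Rightarrow> (int \<Rightarrow> 'w \<Rightarrow> 'w) \<Rightarrow> (nat \<Rightarrow> 'w \<Rightarrow> 'h::metric_space \<Rightarrow> 'h) \<Rightarrow> ('w \<Rightarrow> 'h set) \<Rightarrow> bool" where
  "weak_attractor M \<theta> \<phi> A \<longleftrightarrow>
     random_compact_set M A \<and> invariant_set M \<theta> \<phi> A \<and>
     (\<forall>B. compact B \<and> B \<noteq> {} \<longrightarrow>
        (\<forall>\<epsilon>>0. (\<lambda>t. measure M {\<omega> \<in> space M.
            (SUP x\<in>B. infdist (\<phi> t (\<theta> (- int t) \<omega>) x) (A \<omega>)) > \<epsilon>}) \<longlonglongrightarrow> 0))"

definition synchronizes ::
  "'w measure \<Rightarrow> (int \<Rightarrow> 'w \<Rightarrow> 'w) \<Rightarrow> (nat \<Rightarrow> 'w \<Rightarrow> 'h::metric_space \<Rightarrow> 'h) \<Rightarrow> bool" where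
  "synchronizes M \<theta> \<phi> \<longleftrightarrow>
     (\<exists>A. weak_attractor M \<theta> \<phi> A \<and> (AE \<omega> in M. \<exists>a. A \<omega> = {a}))"

text \<open>Backward orbit condition from the definition of U(omega); the distance to the
  (a.s. singleton) set A is written with infdist.\<close>

definition backward_orbit ::
  "(int \<Rightarrow> 'w \<Rightarrow> 'w) \<Rightarrow> (nat \<Rightarrow> 'w \<Rightarrow> 'h::real_normed_vector \<Rightarrow> 'h) \<Rightarrow> ('w \<Rightarrow> 'h set)
     \<Rightarrow> real \<Rightarrow> ('w \<Rightarrow> real) \<Rightarrow> 'w \<Rightarrow> (nat \<Rightarrow> 'h) \<Rightarrow> bool" where
  "backward_orbit \<theta> \<phi> A \<mu> \<beta> \<omega> xs \<longleftrightarrow>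
     (\<forall>n\<ge>1. \<phi> 1 (\<theta> (- int n) \<omega>) (xs n) = xs (n - 1)) \<and>
     (\<forall>n. infdist (xs n) (A (\<theta> (- int n) \<omega>)) \<le> \<beta> \<omega> * exp (- \<mu> * real n))"

definition U_set ::
  "(int \<Rightarrow> 'w \<Rightarrow> 'w) \<Rightarrow> (nat \<Rightarrow> 'w \<Rightarrow> 'h::real_normed_vector \<Rightarrow> 'h) \<Rightarrow> ('w \<Rightarrow> 'h set)
     \<Rightarrow> real \<Rightarrow> ('w \<Rightarrow> real) \<Rightarrow> ('w \<Rightarrow> real) \<Rightarrow> 'w \<Rightarrow> 'h set" where
  "U_set \<theta> \<phi> A \<mu> \<alpha> \<beta> \<omega> =
     {x0. infdist x0 (A \<omega>) \<le> \<alpha> \<omega> \<and>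
          (\<exists>xs. xs 0 = x0 \<and> backward_orbit \<theta> \<phi> A \<mu> \<beta> \<omega> xs)}"

end

theory Submission
  imports Defs
begin

text \<open>Suppose \<open>\<phi>\<close> synchronizes onto a weak attractor \<open>A'\<close> that is almost surely a singleton.
  If random points \<open>z\<^sub>t\<close> are tight uniformly in \<open>t\<close> and \<open>\<phi>\<^sub>t(\<theta>\<^sub>-\<^sub>t\<omega>, \<cdot>)\<close> carries \<open>z\<^sub>t(\<omega>)\<close> to
  \<open>z\<^sub>0(\<omega>)\<close>, then pulling back a compact set that contains \<open>z\<^sub>t\<close> with high probability and
  applying weak attraction to it shows \<open>z\<^sub>0 \<in> A'\<close> almost surely. The invariant random point
  \<open>A\<close> qualifies because its shifts are identically distributed, and so does the backward orbit
  \<open>x\<^sub>n\<close>: it stays within \<open>\<beta> e\<^sup>-\<^sup>\<mu>\<^sup>n\<close> of these shifts, a distance that tends to zero. Since \<open>A'\<close> is a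
  singleton, \<open>x\<^sub>0 = A\<close> almost surely, contradicting \<open>x\<^sub>0 \<notin> A\<close>.\<close>

lemma countable_dense_subset:
  fixes B :: "'a::second_countable_topology set"
  obtains D where "countable D" "D \<subseteq> B" "\<And>U. open U \<Longrightarrow> U \<inter> B \<noteq> {} \<Longrightarrow> U \<inter> D \<noteq> {}"
proof -
  obtain \<B> :: "'a set set" where \<B>: "countable \<B>" "topological_basis \<B>"
    using ex_countable_basis by blast
  define pick where "pick b = (SOME x. x \<in> b \<inter> B)" for b
  have pick: "pick b \<in> b \<inter> B" if "b \<inter> B \<noteq> {}" for b
    unfolding pick_def using that by (metis ex_in_conv someI)
  define D where "D = pick ` {b\<in>\<B>. b \<inter> B \<noteq> {}}"
  have "U \<inter> D \<noteq> {}" if U: "open U" "U \<inter> B \<noteq> {}" for U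
  proof -
    obtain x where "x \<in> U" "x \<in> B" using U(2) by blast
    then obtain b where "b \<in> \<B>" "x \<in> b" "b \<subseteq> U"
      using topological_basisE[OF \<B>(2) \<open>open U\<close>] by blast
    then show ?thesis
      using pick[of b] \<open>x \<in> B\<close> unfolding D_def by blast
  qed
  moreover have "countable D" "D \<subseteq> B"
    unfolding D_def using \<B>(1) pick by auto
  ultimately show ?thesis using that by blast
qed

lemma borel_measurable_if_dist_measurable:
  fixes f :: "'w \<Rightarrow> 'h::{metric_space, second_countable_topology}"
  assumes "\<And>y. (\<lambda>\<omega>. dist y (f \<omega>)) \<in> borel_measurable M"
  shows "f \<in> borel_measurable M"
proof (rule borel_measurableI)
  fix S :: "'h set" assume "open S"
  obtain D :: "'h set" where "countable D" and D: "\<And>U. open U \<Longrightarrow> U \<noteq> {} \<Longrightarrow> U \<inter> D \<noteq> {}"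
    using countable_dense_subset[of UNIV] by auto
  show "f -` S \<inter> space M \<in> sets M"
  proof (cases "S = UNIV")
    case False
    \<comment> \<open>A point lies in \<open>S\<close> iff some point of \<open>D\<close> is closer to it than to the complement of \<open>S\<close>.\<close>
    have "f -` S \<inter> space M = (\<Union>d\<in>D. {\<omega>\<in>space M. dist d (f \<omega>) < infdist d (- S)})"
    proof (intro set_eqI iffI)
      fix \<omega> assume \<omega>: "\<omega> \<in> f -` S \<inter> space M"
      define r where "r = infdist (f \<omega>) (- S)"
      have "r > 0"
        unfolding r_def using \<omega> False \<open>open S\<close> by (intro infdist_pos_not_in_closed) auto
      then obtain d where "d \<in> D" "dist (f \<omega>) d < r / 2"
        using D[of "ball (f \<omega>) (r / 2)"] by auto
      moreover have "r \<le> infdist d (- S) + dist (f \<omega>) d"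
        unfolding r_def by (rule infdist_triangle)
      ultimately have "dist d (f \<omega>) < infdist d (- S)"
        by (simp add: dist_commute)
      then show "\<omega> \<in> (\<Union>d\<in>D. {\<omega>\<in>space M. dist d (f \<omega>) < infdist d (- S)})"
        using \<omega> \<open>d \<in> D\<close> by blast
    next
      fix \<omega> assume "\<omega> \<in> (\<Union>d\<in>D. {\<omega>\<in>space M. dist d (f \<omega>) < infdist d (- S)})"
      then obtain d where "\<omega> \<in> space M" "dist d (f \<omega>) < infdist d (- S)" by auto
      then show "\<omega> \<in> f -` S \<inter> space M"
        using infdist_le[of "f \<omega>" "- S" d] by force
    qed
    also have "\<dots> \<in> sets M"
      using \<open>countable D\<close> assms unfolding borel_measurable_iff_less by (intro sets.countable_UN') auto
    finally show ?thesis .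
  qed simp
qed

lemma borel_measurable_infdist_random_set:
  fixes y :: "'w \<Rightarrow> 'h::{metric_space, second_countable_topology}"
  assumes y: "y \<in> borel_measurable M"
    and S: "\<And>x. (\<lambda>\<omega>. infdist x (S \<omega>)) \<in> borel_measurable M"
  shows "(\<lambda>\<omega>. infdist (y \<omega>) (S \<omega>)) \<in> borel_measurable M"
proof (rule borel_measurableI_less)
  fix c :: real
  obtain D :: "'h set" where "countable D" and D: "\<And>U. open U \<Longrightarrow> U \<noteq> {} \<Longrightarrow> U \<inter> D \<noteq> {}"
    using countable_dense_subset[of UNIV] by auto
  have "{\<omega> \<in> space M. infdist (y \<omega>) (S \<omega>) < c} =
      (\<Union>d\<in>D. {\<omega> \<in> space M. infdist d (S \<omega>) + dist (y \<omega>) d < c})"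
  proof (intro set_eqI iffI)
    fix \<omega> assume \<omega>: "\<omega> \<in> {\<omega> \<in> space M. infdist (y \<omega>) (S \<omega>) < c}"
    define e where "e = (c - infdist (y \<omega>) (S \<omega>)) / 2"
    have "e > 0" using \<omega> unfolding e_def by auto
    then obtain d where "d \<in> D" "dist (y \<omega>) d < e"
      using D[of "ball (y \<omega>) e"] by auto
    moreover have "infdist d (S \<omega>) \<le> infdist (y \<omega>) (S \<omega>) + dist d (y \<omega>)"
      by (rule infdist_triangle)
    ultimately have "infdist d (S \<omega>) + dist (y \<omega>) d < c"
      unfolding e_def by (simp add: dist_commute)
    then show "\<omega> \<in> (\<Union>d\<in>D. {\<omega> \<in> space M. infdist d (S \<omega>) + dist (y \<omega>) d < c})"
      using \<omega> \<open>d \<in> D\<close> by blast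
  next
    fix \<omega> assume "\<omega> \<in> (\<Union>d\<in>D. {\<omega> \<in> space M. infdist d (S \<omega>) + dist (y \<omega>) d < c})"
    then obtain d where "\<omega> \<in> space M" "infdist d (S \<omega>) + dist (y \<omega>) d < c" by blast
    then show "\<omega> \<in> {\<omega> \<in> space M. infdist (y \<omega>) (S \<omega>) < c}"
      using infdist_triangle[of "y \<omega>" "S \<omega>" d] by simp
  qed
  also have "\<dots> \<in> sets M"
  proof (intro sets.countable_UN' image_subsetI \<open>countable D\<close>)
    note [measurable] = S y
    show "{\<omega> \<in> space M. infdist d (S \<omega>) + dist (y \<omega>) d < c} \<in> sets M" for d
      by measurable
  qed
  finally show "{\<omega> \<in> space M. infdist (y \<omega>) (S \<omega>) < c} \<in> sets M" .
qed

lemma borel_measurable_SUP_compact: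
  fixes g :: "'h::{metric_space, second_countable_topology} \<Rightarrow> 'w \<Rightarrow> real"
  assumes B: "compact B" "B \<noteq> {}"
    and g: "\<And>x. g x \<in> borel_measurable M"
    and cont: "\<And>\<omega>. \<omega> \<in> space M \<Longrightarrow> continuous_on B (\<lambda>x. g x \<omega>)"
  shows "(\<lambda>\<omega>. SUP x\<in>B. g x \<omega>) \<in> borel_measurable M"
proof (rule borel_measurableI_greater)
  fix c :: real
  obtain D where "countable D" "D \<subseteq> B" and D: "\<And>U. open U \<Longrightarrow> U \<inter> B \<noteq> {} \<Longrightarrow> U \<inter> D \<noteq> {}"
    using countable_dense_subset[of B] by blast
  have bdd: "bdd_above ((\<lambda>x. g x \<omega>) ` B)" if "\<omega> \<in> space M" for \<omega>
    using compact_continuous_image[OF cont[OF that] B(1)]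
    by (intro bounded_imp_bdd_above compact_imp_bounded)
  \<comment> \<open>By continuity, the supremum exceeds \<open>c\<close> iff it does so on the countable dense set \<open>D\<close>.\<close>
  have "{\<omega> \<in> space M. c < (SUP x\<in>B. g x \<omega>)} = (\<Union>d\<in>D. {\<omega> \<in> space M. c < g d \<omega>})"
  proof (intro set_eqI iffI)
    fix \<omega> assume \<omega>: "\<omega> \<in> {\<omega> \<in> space M. c < (SUP x\<in>B. g x \<omega>)}"
    then obtain x where x: "x \<in> B" "c < g x \<omega>"
      using less_cSUP_iff[OF B(2) bdd] by auto
    have "openin (top_of_set B) (B \<inter> (\<lambda>x. g x \<omega>) -` {c<..})"
      using continuous_openin_preimage_gen[OF cont] \<omega> by auto
    then obtain U where "open U" "B \<inter> (\<lambda>x. g x \<omega>) -` {c<..} = U \<inter> B"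
      unfolding openin_open by auto
    moreover from this have "U \<inter> D \<noteq> {}"
      using D x by blast
    ultimately show "\<omega> \<in> (\<Union>d\<in>D. {\<omega> \<in> space M. c < g d \<omega>})"
      using \<omega> \<open>D \<subseteq> B\<close> by blast
  next
    fix \<omega> assume "\<omega> \<in> (\<Union>d\<in>D. {\<omega> \<in> space M. c < g d \<omega>})"
    then obtain d where "d \<in> D" "\<omega> \<in> space M" "c < g d \<omega>" by auto
    then show "\<omega> \<in> {\<omega> \<in> space M. c < (SUP x\<in>B. g x \<omega>)}"
      using cSUP_upper[OF _ bdd, of d] \<open>D \<subseteq> B\<close> by fastforce
  qed
  also have "\<dots> \<in> sets M"
    using \<open>countable D\<close> g unfolding borel_measurable_iff_greater by (intro sets.countable_UN') auto
  finally show "{\<omega> \<in> space M. c < (SUP x\<in>B. g x \<omega>)} \<in> sets M" .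
qed

lemma borel_measurable_notin_closed:
  assumes "f \<in> borel_measurable M" "closed K"
  shows "{\<omega>\<in>space M. f \<omega> \<notin> K} \<in> sets M"
proof -
  have "{\<omega>\<in>space M. f \<omega> \<notin> K} = space M - (f -` K \<inter> space M)" by auto
  then show ?thesis
    using measurable_sets[OF assms(1) borel_closed[OF assms(2)]] by auto
qed

lemma compact_Un_shrinking_neighbourhoods:
  fixes K :: "'a::metric_space set" and L :: "nat \<Rightarrow> 'a set"
  assumes K: "compact K" "K \<noteq> {}" and L: "\<And>t. compact (L t)" and r: "r \<longlonglongrightarrow> 0"
  shows "compact (K \<union> (\<Union>t. L t \<inter> {y. infdist y K \<le> r t}))" (is "compact ?S")
  unfolding compact_eq_Heine_Borel
proof (intro allI impI, elim conjE)
  fix C assume C: "\<forall>c\<in>C. open c" "?S \<subseteq> \<Union>C"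
  obtain C\<^sub>K where C\<^sub>K: "C\<^sub>K \<subseteq> C" "finite C\<^sub>K" "K \<subseteq> \<Union>C\<^sub>K"
    using K(1) C unfolding compact_eq_Heine_Borel by (meson Un_subset_iff)
  then obtain e where "e > 0" and e: "(\<Union>x\<in>K. ball x e) \<subseteq> \<Union>C\<^sub>K"
    using compact_subset_open_imp_ball_epsilon_subset[OF K(1)] C(1) by (metis open_Union subsetD)
  obtain T where T: "\<And>t. t \<ge> T \<Longrightarrow> r t < e"
    using order_tendstoD(2)[OF r \<open>e > 0\<close>] by (auto simp: eventually_sequentially)
  \<comment> \<open>Beyond \<open>T\<close> the pieces lie in the \<open>e\<close>-neighbourhood of \<open>K\<close>; the first \<open>T\<close> pieces form a compact set.\<close>
  define F where "F = (\<Union>t<T. L t \<inter> {y. infdist y K \<le> r t})"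
  have "compact F"
    unfolding F_def
    by (intro compact_UN finite_lessThan compact_Int_closed L closed_Collect_le continuous_intros)
  moreover have "F \<subseteq> \<Union>C" using C(2) unfolding F_def by blast
  ultimately obtain C\<^sub>F where C\<^sub>F: "C\<^sub>F \<subseteq> C" "finite C\<^sub>F" "F \<subseteq> \<Union>C\<^sub>F"
    using C(1) unfolding compact_eq_Heine_Borel by meson
  have "?S \<subseteq> \<Union>(C\<^sub>K \<union> C\<^sub>F)"
  proof
    fix y assume "y \<in> ?S"
    then consider "y \<in> K" | t where "y \<in> L t" "infdist y K \<le> r t" by blast
    then show "y \<in> \<Union>(C\<^sub>K \<union> C\<^sub>F)"
    proof cases
      case (2 t)
      show ?thesis
      proof (cases "t < T")
        case True
        then show ?thesis using 2 C\<^sub>F(3) unfolding F_def by blast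
      next
        case False
        then have "(INF k\<in>K. dist y k) < e"
          using 2 T[of t] infdist_notempty[OF K(2)] by simp
        then obtain k where "k \<in> K" "dist y k < e"
          by (subst (asm) cINF_less_iff[OF K(2)]) (auto intro: bdd_belowI[of _ 0])
        then have "y \<in> (\<Union>x\<in>K. ball x e)" by (auto simp: dist_commute)
        then show ?thesis using e by blast
      qed
    qed (use C\<^sub>K in blast)
  qed
  then show "\<exists>C'\<subseteq>C. finite C' \<and> ?S \<subseteq> \<Union>C'"
    using C\<^sub>K C\<^sub>F by (intro exI[of _ "C\<^sub>K \<union> C\<^sub>F"]) auto
qed

definition uniformly_tight :: "'w measure \<Rightarrow> ('i \<Rightarrow> 'w \<Rightarrow> 'h::topological_space) \<Rightarrow> bool" where
  "uniformly_tight M z \<longleftrightarrow>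
     (\<forall>e>0. \<exists>B. compact B \<and> B \<noteq> {} \<and> (\<forall>t. measure M {\<omega>\<in>space M. z t \<omega> \<notin> B} \<le> e))"

lemma (in prob_space) random_variable_tight:
  fixes z :: "'a \<Rightarrow> 'h::{complete_space, second_countable_topology}"
  assumes z: "z \<in> borel_measurable M" and "e > 0"
  obtains K where "compact K" "K \<noteq> {}" "prob {\<omega>\<in>space M. z \<omega> \<notin> K} \<le> e"
proof -
  define N where "N = distr M borel z"
  interpret N: finite_measure N
    unfolding N_def using z by (intro finite_measure_distr)
  have "emeasure N UNIV = (SUP K \<in> {K. K \<subseteq> UNIV \<and> compact K}. emeasure N K)"
    using N.emeasure_finite[of UNIV] by (intro inner_regular) (auto simp: N_def)
  moreover have "emeasure N UNIV = 1"
    unfolding N_def using z by (subst emeasure_distr) (auto simp: emeasure_space_1)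
  moreover have "ennreal (1 - e) < 1"
    using \<open>e > 0\<close> by (simp add: ennreal_lessI flip: ennreal_1)
  ultimately have "ennreal (1 - e) < (SUP K \<in> {K. compact K}. emeasure N K)"
    by simp
  then obtain K where "compact K" and K: "ennreal (1 - e) < emeasure N K"
    by (auto simp: less_SUP_iff)
  have K_events: "z -` K \<inter> space M \<in> events"
    using z \<open>compact K\<close> by (simp add: measurable_sets borel_compact)
  have "emeasure N K = ennreal (prob (z -` K \<inter> space M))"
    unfolding N_def using z \<open>compact K\<close> K_events
    by (subst emeasure_distr) (auto simp: borel_compact emeasure_eq_measure)
  with K have "1 - e \<le> prob (z -` K \<inter> space M)"
    by (cases "0 \<le> 1 - e") (simp_all add: ennreal_less_iff order.trans[OF _ measure_nonneg])
  \<comment> \<open>Any extra point makes \<open>K\<close> non-empty without enlarging the exceptional event.\<close>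
  have "prob {\<omega>\<in>space M. z \<omega> \<notin> insert undefined K} \<le> prob (space M - (z -` K \<inter> space M))"
    using K_events by (intro finite_measure_mono) auto
  also have "\<dots> = 1 - prob (z -` K \<inter> space M)"
    using K_events by (rule prob_compl)
  finally show ?thesis
    using that[of "insert undefined K"] \<open>compact K\<close> \<open>1 - e \<le> _\<close> by simp
qed

lemma (in prob_space) prob_le_AE_Un:
  assumes "AE \<omega> in M. \<omega> \<in> A \<longrightarrow> \<omega> \<in> B \<union> C" "B \<in> events" "C \<in> events"
  shows "prob A \<le> prob B + prob C"
proof -
  have "prob A \<le> prob (B \<union> C)"
    using assms(1) by (rule finite_measure_mono_AE) (use assms(2,3) in blast)
  also have "\<dots> \<le> prob B + prob C"
    using assms(2,3) by (rule measure_Un_le)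
  finally show ?thesis .
qed

lemma random_point_singleton_measurable:
  fixes x :: "'w \<Rightarrow> 'h::{metric_space, second_countable_topology}"
  assumes "random_point M (\<lambda>\<omega>. {x \<omega>})"
  shows "x \<in> borel_measurable M"
proof (rule borel_measurable_if_dist_measurable)
  fix y
  show "(\<lambda>\<omega>. dist y (x \<omega>)) \<in> borel_measurable M"
    using assms unfolding random_point_def infdist_singleton by blast
qed

lemma random_point_measurable_selection:
  fixes A :: "'w \<Rightarrow> 'h::{metric_space, second_countable_topology} set"
  assumes "random_point M A"
  obtains a where "a \<in> borel_measurable M" "AE \<omega> in M. A \<omega> = {a \<omega>}"
proof -
  have "AE \<omega> in M. \<exists>a. A \<omega> = {a}"
    using assms unfolding random_point_def by blast
  then obtain N where N: "\<And>\<omega>. \<omega> \<in> space M - N \<Longrightarrow> \<exists>a. A \<omega> = {a}" "N \<in> null_sets M"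
    by (elim AE_E3) blast
  \<comment> \<open>Off the measurable null set \<open>N\<close>, \<open>dist y (a \<omega>) = infdist y (A \<omega>)\<close>.\<close>
  define a where "a \<omega> = (if \<omega> \<in> N then undefined else the_elem (A \<omega>))" for \<omega>
  have A_eq: "A \<omega> = {a \<omega>}" if "\<omega> \<in> space M" "\<omega> \<notin> N" for \<omega>
    using N(1)[of \<omega>] that unfolding a_def by force
  have "AE \<omega> in M. A \<omega> = {a \<omega>}"
    using N(2) by (rule AE_I') (auto dest: A_eq)
  moreover have "a \<in> borel_measurable M"
  proof (rule borel_measurable_if_dist_measurable)
    fix y
    have "(\<lambda>\<omega>. if \<omega> \<in> N then dist y undefined else infdist y (A \<omega>)) \<in> borel_measurable M"
      using assms N(2) unfolding random_point_def by (intro measurable_If_set) auto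
    moreover have "dist y (a \<omega>) = (if \<omega> \<in> N then dist y undefined else infdist y (A \<omega>))"
      if "\<omega> \<in> space M" for \<omega>
    proof (cases "\<omega> \<in> N")
      case False
      then show ?thesis using A_eq[OF that False] by simp
    qed (simp add: a_def)
    ultimately show "(\<lambda>\<omega>. dist y (a \<omega>)) \<in> borel_measurable M"
      by (simp cong: measurable_cong)
  qed
  ultimately show ?thesis using that by blast
qed

locale random_dynamical_system =
  fixes M :: "'w measure" and \<theta> :: "int \<Rightarrow> 'w \<Rightarrow> 'w" and F :: "int \<Rightarrow> int \<Rightarrow> 'w measure"
    and \<phi> :: "nat \<Rightarrow> 'w \<Rightarrow> 'h::{real_inner, banach, second_countable_topology} \<Rightarrow> 'h"
  assumes rds: "rds M \<theta> F \<phi>"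
begin

lemma metric_dynamical_system: "metric_dynamical_system M \<theta>"
  using rds unfolding rds_def by blast

sublocale prob_space M
  using metric_dynamical_system unfolding metric_dynamical_system_def by blast

lemma shift_measurable: "\<theta> n \<in> M \<rightarrow>\<^sub>M M"
  using metric_dynamical_system unfolding metric_dynamical_system_def by blast

lemma shift_in_space: "\<omega> \<in> space M \<Longrightarrow> \<theta> n \<omega> \<in> space M"
  using shift_measurable by (rule measurable_space)

lemma shift_add: "\<omega> \<in> space M \<Longrightarrow> \<theta> (s + t) \<omega> = \<theta> s (\<theta> t \<omega>)"
  using metric_dynamical_system unfolding metric_dynamical_system_def by blast

lemma shift_zero: "\<omega> \<in> space M \<Longrightarrow> \<theta> 0 \<omega> = \<omega>"
  using metric_dynamical_system unfolding metric_dynamical_system_def by blast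

lemma shift_cancel: "\<omega> \<in> space M \<Longrightarrow> \<theta> (int t) (\<theta> (- int t) \<omega>) = \<omega>"
  using shift_add[of \<omega> "int t" "- int t"] shift_zero[of \<omega>] by simp

lemma distr_shift: "distr M M (\<theta> n) = M"
  using metric_dynamical_system unfolding metric_dynamical_system_def by blast

lemma AE_shift:
  assumes "AE \<omega> in M. P \<omega>"
  shows "AE \<omega> in M. P (\<theta> n \<omega>)"
proof -
  have "AE \<omega> in distr M M (\<theta> n). P \<omega>"
    unfolding distr_shift by (rule assms)
  then show ?thesis by (rule AE_distrD[OF shift_measurable])
qed

lemma prob_shift_vimage: "S \<in> events \<Longrightarrow> prob (\<theta> n -` S \<inter> space M) = prob S"
  using measure_distr[OF shift_measurable, of S n] by (simp add: distr_shift)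

lemma borel_measurable_cocycle:
  assumes "w \<in> M \<rightarrow>\<^sub>M M" "y \<in> borel_measurable M"
  shows "(\<lambda>\<omega>. \<phi> t (w \<omega>) (y \<omega>)) \<in> borel_measurable M"
proof -
  have "(\<lambda>(\<omega>, x). \<phi> t \<omega> x) \<in> borel_measurable (M \<Otimes>\<^sub>M borel)"
    using rds unfolding rds_def by (elim conjE) blast
  from measurable_compose[OF measurable_Pair[OF assms] this] show ?thesis by simp
qed

lemma continuous_on_cocycle: "\<omega> \<in> space M \<Longrightarrow> continuous_on UNIV (\<phi> t \<omega>)"
  using rds unfolding rds_def by (elim conjE) blast

lemma cocycle_zero: "\<omega> \<in> space M \<Longrightarrow> \<phi> 0 \<omega> x = x"
  using rds unfolding rds_def by (elim conjE) blast

lemma cocycle_add: "\<omega> \<in> space M \<Longrightarrow> \<phi> (s + t) \<omega> x = \<phi> t (\<theta> (int s) \<omega>) (\<phi> s \<omega> x)"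
  using rds unfolding rds_def by (elim conjE) blast

lemma backward_orbit_pullback:
  assumes "\<omega> \<in> space M" "backward_orbit \<theta> \<phi> A \<mu> \<beta> \<omega> xs"
  shows "\<phi> n (\<theta> (- int n) \<omega>) (xs n) = xs 0"
proof (induction n)
  case 0
  show ?case using cocycle_zero shift_in_space[OF assms(1)] by simp
next
  case (Suc n)
  define \<omega>' where "\<omega>' = \<theta> (- int (Suc n)) \<omega>"
  have "\<omega>' \<in> space M" unfolding \<omega>'_def by (rule shift_in_space[OF assms(1)])
  have "\<theta> 1 \<omega>' = \<theta> (- int n) \<omega>"
    unfolding \<omega>'_def using shift_add[OF assms(1), of 1 "- int (Suc n)"] by simp
  moreover have "\<phi> 1 \<omega>' (xs (Suc n)) = xs n"
    using assms(2) unfolding backward_orbit_def \<omega>'_def by (metis diff_Suc_1 le_add1 plus_1_eq_Suc)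
  moreover have "\<phi> (1 + n) \<omega>' x = \<phi> n (\<theta> 1 \<omega>') (\<phi> 1 \<omega>' x)" for x
    using cocycle_add[OF \<open>\<omega>' \<in> space M\<close>, of 1 n x] by simp
  ultimately show ?case
    using Suc.IH unfolding \<omega>'_def by simp
qed

lemma invariant_point_pullback:
  assumes "invariant_set M \<theta> \<phi> A" "AE \<omega> in M. A \<omega> = {a \<omega>}"
  shows "AE \<omega> in M. \<phi> t (\<theta> (- int t) \<omega>) (a (\<theta> (- int t) \<omega>)) = a \<omega>"
proof -
  have "AE \<omega> in M. \<phi> t (\<theta> (- int t) \<omega>) ` A (\<theta> (- int t) \<omega>) = A (\<theta> (int t) (\<theta> (- int t) \<omega>))"
    using assms(1) unfolding invariant_set_def by (intro AE_shift) blast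
  moreover have "AE \<omega> in M. A (\<theta> (- int t) \<omega>) = {a (\<theta> (- int t) \<omega>)}"
    using assms(2) by (rule AE_shift)
  ultimately show ?thesis
    using assms(2) AE_space by eventually_elim (simp add: shift_cancel)
qed

lemma uniformly_tight_shift:
  fixes z :: "'w \<Rightarrow> 'a::{complete_space, second_countable_topology}"
  assumes z: "z \<in> borel_measurable M"
  shows "uniformly_tight M (\<lambda>t \<omega>. z (\<theta> (- int t) \<omega>))"
  unfolding uniformly_tight_def
proof (intro allI impI)
  fix e :: real assume "e > 0"
  then obtain K where K: "compact K" "K \<noteq> {}" "prob {\<omega>\<in>space M. z \<omega> \<notin> K} \<le> e"
    using random_variable_tight[OF z] by metis
  have events: "{\<omega>\<in>space M. z \<omega> \<notin> K} \<in> events"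
    using z K(1) by (intro borel_measurable_notin_closed compact_imp_closed)
  have "prob {\<omega>\<in>space M. z (\<theta> (- int t) \<omega>) \<notin> K} = prob (\<theta> (- int t) -` {\<omega>\<in>space M. z \<omega> \<notin> K} \<inter> space M)"
    for t using shift_in_space by (intro arg_cong[where f = prob]) auto
  then have "prob {\<omega>\<in>space M. z (\<theta> (- int t) \<omega>) \<notin> K} \<le> e" for t
    using K(3) prob_shift_vimage[OF events] by simp
  with K(1,2) show "\<exists>B. compact B \<and> B \<noteq> {} \<and> (\<forall>t. prob {\<omega>\<in>space M. z (\<theta> (- int t) \<omega>) \<notin> B} \<le> e)"
    by blast
qed

lemma uniformly_tight_backward_orbit:
  assumes "\<mu> > 0" and \<beta>: "\<And>\<omega>. \<omega> \<in> space M \<Longrightarrow> \<beta> \<omega> \<le> 1"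
    and a: "a \<in> borel_measurable M" "AE \<omega> in M. A \<omega> = {a \<omega>}"
    and xs: "\<And>n. (\<lambda>\<omega>. xs \<omega> n) \<in> borel_measurable M"
      "AE \<omega> in M. backward_orbit \<theta> \<phi> A \<mu> \<beta> \<omega> (xs \<omega>)"
  shows "uniformly_tight M (\<lambda>t \<omega>. xs \<omega> t)"
  unfolding uniformly_tight_def
proof (intro allI impI)
  fix e :: real assume "e > 0"
  then obtain K where K: "compact K" "K \<noteq> {}" "prob {\<omega>\<in>space M. a \<omega> \<notin> K} \<le> e / 2"
    using random_variable_tight[OF a(1), of "e / 2"] by auto
  have "\<exists>L. compact L \<and> prob {\<omega>\<in>space M. xs \<omega> t \<notin> L} \<le> e / 2" for t
    using random_variable_tight[OF xs(1), of "e / 2"] \<open>e > 0\<close> by auto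
  then obtain L where L: "\<And>t. compact (L t)" "\<And>t. prob {\<omega>\<in>space M. xs \<omega> t \<notin> L t} \<le> e / 2"
    by metis
  define r where "r t = exp (- \<mu>) ^ t" for t :: nat
  have "r \<longlonglongrightarrow> 0"
    unfolding r_def using \<open>\<mu> > 0\<close> by (intro LIMSEQ_power_zero) simp
  \<comment> \<open>\<open>x\<^sub>t\<close> lies in \<open>L t\<close> and, being \<open>r t\<close>-close to \<open>a (\<theta>\<^sub>-\<^sub>t \<omega>)\<close>, near \<open>K\<close> as soon as that point lies in \<open>K\<close>.\<close>
  define B where "B = K \<union> (\<Union>t. L t \<inter> {y. infdist y K \<le> r t})"
  have "compact B"
    unfolding B_def using K(1,2) L(1) \<open>r \<longlonglongrightarrow> 0\<close> by (rule compact_Un_shrinking_neighbourhoods)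
  have "prob {\<omega>\<in>space M. xs \<omega> t \<notin> B} \<le> e" for t
  proof -
    define shifted_out where "shifted_out = \<theta> (- int t) -` {\<omega>\<in>space M. a \<omega> \<notin> K} \<inter> space M"
    have out_events: "{\<omega>\<in>space M. a \<omega> \<notin> K} \<in> events"
      using a(1) K(1) by (intro borel_measurable_notin_closed compact_imp_closed)
    have "AE \<omega> in M. \<omega> \<in> {\<omega>\<in>space M. xs \<omega> t \<notin> B} \<longrightarrow>
        \<omega> \<in> {\<omega>\<in>space M. xs \<omega> t \<notin> L t} \<union> shifted_out"
      using xs(2) AE_shift[OF a(2), of "- int t"]
    proof eventually_elim
      case (elim \<omega>)
      have "infdist (xs \<omega> t) {a (\<theta> (- int t) \<omega>)} \<le> \<beta> \<omega> * exp (- \<mu> * real t)"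
        using elim unfolding backward_orbit_def by metis
      moreover have "\<beta> \<omega> * exp (- \<mu> * real t) \<le> r t" if "\<omega> \<in> space M"
        using \<beta>[OF that] unfolding r_def by (simp add: exp_of_nat_mult[symmetric] mult.commute)
      ultimately have "infdist (xs \<omega> t) K \<le> r t" if "\<omega> \<in> space M" "a (\<theta> (- int t) \<omega>) \<in> K"
        using infdist_le[OF that(2), of "xs \<omega> t"] that(1) by fastforce
      then show ?case
        unfolding B_def shifted_out_def using shift_in_space by blast
    qed
    then have "prob {\<omega>\<in>space M. xs \<omega> t \<notin> B} \<le> prob {\<omega>\<in>space M. xs \<omega> t \<notin> L t} + prob shifted_out"
      unfolding shifted_out_def using xs(1) L(1) shift_measurable out_events
      by (intro prob_le_AE_Un borel_measurable_notin_closed compact_imp_closed measurable_sets) auto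
    also have "prob shifted_out = prob {\<omega>\<in>space M. a \<omega> \<notin> K}"
      unfolding shifted_out_def using out_events by (rule prob_shift_vimage)
    finally show ?thesis using L(2)[of t] K(3) by linarith
  qed
  moreover have "B \<noteq> {}" unfolding B_def using K(2) by blast
  ultimately show "\<exists>B. compact B \<and> B \<noteq> {} \<and> (\<forall>t. prob {\<omega>\<in>space M. xs \<omega> t \<notin> B} \<le> e)"
    using \<open>compact B\<close> by blast
qed

lemma pullback_far_from_attractor_le:
  assumes A': "\<And>x. (\<lambda>\<omega>. infdist x (A' \<omega>)) \<in> borel_measurable M"
    and B: "compact B" "B \<noteq> {}"
    and z: "z \<in> borel_measurable M"
    and pullback: "AE \<omega> in M. \<phi> t (\<theta> (- int t) \<omega>) (z \<omega>) = z0 \<omega>"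
  shows "prob {\<omega>\<in>space M. \<delta> < infdist (z0 \<omega>) (A' \<omega>)}
    \<le> prob {\<omega>\<in>space M. z \<omega> \<notin> B}
      + prob {\<omega>\<in>space M. \<delta> < (SUP x\<in>B. infdist (\<phi> t (\<theta> (- int t) \<omega>) x) (A' \<omega>))}"
proof (rule prob_le_AE_Un)
  let ?dist = "\<lambda>x \<omega>. infdist (\<phi> t (\<theta> (- int t) \<omega>) x) (A' \<omega>)"
  have cont: "continuous_on B (\<lambda>x. ?dist x \<omega>)" if "\<omega> \<in> space M" for \<omega>
    by (intro continuous_on_infdist continuous_on_subset[OF continuous_on_cocycle[OF shift_in_space[OF that]]])
      simp
  show "{\<omega>\<in>space M. z \<omega> \<notin> B} \<in> events"
    using z B(1) by (intro borel_measurable_notin_closed compact_imp_closed)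
  have "?dist x \<in> borel_measurable M" for x
    using borel_measurable_cocycle[OF shift_measurable borel_measurable_const] A'
    by (rule borel_measurable_infdist_random_set)
  with B have "(\<lambda>\<omega>. SUP x\<in>B. ?dist x \<omega>) \<in> borel_measurable M"
    using cont by (rule borel_measurable_SUP_compact)
  then show "{\<omega>\<in>space M. \<delta> < (SUP x\<in>B. ?dist x \<omega>)} \<in> events"
    by (simp add: borel_measurable_iff_greater)
  show "AE \<omega> in M. \<omega> \<in> {\<omega>\<in>space M. \<delta> < infdist (z0 \<omega>) (A' \<omega>)} \<longrightarrow>
      \<omega> \<in> {\<omega>\<in>space M. z \<omega> \<notin> B} \<union> {\<omega>\<in>space M. \<delta> < (SUP x\<in>B. ?dist x \<omega>)}"
    using pullback
  proof (eventually_elim, intro impI)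
    case (elim \<omega>)
    assume far: "\<omega> \<in> {\<omega>\<in>space M. \<delta> < infdist (z0 \<omega>) (A' \<omega>)}"
    have "\<delta> < (SUP x\<in>B. ?dist x \<omega>)" if "z \<omega> \<in> B"
    proof -
      have "bdd_above ((\<lambda>x. ?dist x \<omega>) ` B)"
        using far compact_continuous_image[OF cont B(1)]
        by (intro bounded_imp_bdd_above compact_imp_bounded) simp
      then have "?dist (z \<omega>) \<omega> \<le> (SUP x\<in>B. ?dist x \<omega>)"
        using that by (rule cSUP_upper2) simp
      then show ?thesis
        using far elim by simp
    qed
    then show "\<omega> \<in> {\<omega>\<in>space M. z \<omega> \<notin> B} \<union> {\<omega>\<in>space M. \<delta> < (SUP x\<in>B. ?dist x \<omega>)}"
      using far by blast
  qed
qed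

lemma pullback_in_weak_attractor:
  assumes attractor: "weak_attractor M \<theta> \<phi> A'"
    and z: "\<And>t. z t \<in> borel_measurable M" "z0 \<in> borel_measurable M"
    and tight: "uniformly_tight M z"
    and pullback: "\<And>t. AE \<omega> in M. \<phi> t (\<theta> (- int t) \<omega>) (z t \<omega>) = z0 \<omega>"
  shows "AE \<omega> in M. z0 \<omega> \<in> A' \<omega>"
proof -
  have A': "\<And>\<omega>. \<omega> \<in> space M \<Longrightarrow> A' \<omega> \<noteq> {}" "AE \<omega> in M. compact (A' \<omega>)"
    "\<And>x. (\<lambda>\<omega>. infdist x (A' \<omega>)) \<in> borel_measurable M"
    using attractor unfolding weak_attractor_def random_compact_set_def by auto
  have attract: "\<And>B \<epsilon>. compact B \<Longrightarrow> B \<noteq> {} \<Longrightarrow> \<epsilon> > 0 \<Longrightarrow>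
      (\<lambda>t. prob {\<omega>\<in>space M. \<epsilon> < (SUP x\<in>B. infdist (\<phi> t (\<theta> (- int t) \<omega>) x) (A' \<omega>))}) \<longlonglongrightarrow> 0"
    using attractor unfolding weak_attractor_def by blast
  have far_events: "{\<omega>\<in>space M. \<delta> < infdist (z0 \<omega>) (A' \<omega>)} \<in> events" for \<delta>
    using borel_measurable_infdist_random_set[OF z(2) A'(3)]
    unfolding borel_measurable_iff_greater by blast
  have far_null: "prob {\<omega>\<in>space M. \<delta> < infdist (z0 \<omega>) (A' \<omega>)} = 0" if "\<delta> > 0" for \<delta>
  proof -
    have "prob {\<omega>\<in>space M. \<delta> < infdist (z0 \<omega>) (A' \<omega>)} \<le> 0 + e" if "e > 0" for e
    proof -
      obtain B where B: "compact B" "B \<noteq> {}" "\<And>t. prob {\<omega>\<in>space M. z t \<omega> \<notin> B} \<le> e"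
        using tight \<open>e > 0\<close> unfolding uniformly_tight_def by blast
      let ?attract = "\<lambda>t. prob {\<omega>\<in>space M. \<delta> < (SUP x\<in>B. infdist (\<phi> t (\<theta> (- int t) \<omega>) x) (A' \<omega>))}"
      have "(\<lambda>t. e + ?attract t) \<longlonglongrightarrow> e + 0"
        using attract[OF B(1,2) \<open>\<delta> > 0\<close>] by (intro tendsto_add tendsto_const)
      moreover have "prob {\<omega>\<in>space M. \<delta> < infdist (z0 \<omega>) (A' \<omega>)} \<le> e + ?attract t" for t
        using pullback_far_from_attractor_le[OF A'(3) B(1,2) z(1) pullback[of t], of \<delta>] B(3)[of t]
        by linarith
      ultimately show ?thesis
        by (intro LIMSEQ_le_const) auto
    qed
    then have "prob {\<omega>\<in>space M. \<delta> < infdist (z0 \<omega>) (A' \<omega>)} \<le> 0"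
      by (rule field_le_epsilon)
    then show ?thesis
      using measure_nonneg[of M "{\<omega>\<in>space M. \<delta> < infdist (z0 \<omega>) (A' \<omega>)}"] by linarith
  qed
  have "AE \<omega> in M. infdist (z0 \<omega>) (A' \<omega>) \<le> inverse (Suc n)" for n
  proof (rule AE_I')
    show "{\<omega>\<in>space M. inverse (Suc n) < infdist (z0 \<omega>) (A' \<omega>)} \<in> null_sets M"
      using far_null[of "inverse (Suc n)"] far_events by (simp add: null_sets_def emeasure_eq_measure)
  qed (auto simp: not_le)
  then have "AE \<omega> in M. \<forall>n. infdist (z0 \<omega>) (A' \<omega>) \<le> inverse (Suc n)"
    by (simp add: AE_all_countable)
  then show ?thesis
    using A'(2) AE_space
  proof eventually_elim
    case (elim \<omega>)
    have "\<not> 0 < infdist (z0 \<omega>) (A' \<omega>)"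
    proof
      assume "0 < infdist (z0 \<omega>) (A' \<omega>)"
      then obtain n where "0 < n" "inverse (real n) < infdist (z0 \<omega>) (A' \<omega>)"
        using ex_inverse_of_nat_less by blast
      moreover have "infdist (z0 \<omega>) (A' \<omega>) \<le> inverse (real n)"
        using elim(1) \<open>0 < n\<close> by (metis Suc_pred)
      ultimately show False by simp
    qed
    then have "infdist (z0 \<omega>) (A' \<omega>) = 0"
      using infdist_nonneg[of "z0 \<omega>" "A' \<omega>"] by simp
    then show ?case
      using in_closed_iff_infdist_zero[OF compact_imp_closed[OF elim(2)] A'(1)[OF elim(3)]] by simp
  qed
qed

end

theorem proposition2:
  fixes M :: "'w measure" and \<theta> :: "int \<Rightarrow> 'w \<Rightarrow> 'w"
    and F :: "int \<Rightarrow> int \<Rightarrow> 'w measure"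
    and \<phi> :: "nat \<Rightarrow> 'w \<Rightarrow> 'h::{real_inner, banach, second_countable_topology} \<Rightarrow> 'h"
    and A :: "'w \<Rightarrow> 'h set" and \<mu> :: real and \<alpha> \<beta> :: "'w \<Rightarrow> real"
  assumes "rds M \<theta> F \<phi>"
    and "random_point M A"
    and "invariant_set M \<theta> \<phi> A"
    and "\<mu> > 0"
    and "\<alpha> \<in> borel_measurable M" and "\<beta> \<in> borel_measurable M"
    and "\<forall>\<omega>\<in>space M. 0 < \<alpha> \<omega> \<and> \<alpha> \<omega> < \<beta> \<omega> \<and> \<beta> \<omega> < 1"
    and "AE \<omega> in M. \<exists>x y. x \<in> U_set \<theta> \<phi> A \<mu> \<alpha> \<beta> \<omega> \<and> y \<in> U_set \<theta> \<phi> A \<mu> \<alpha> \<beta> \<omega> \<and> x \<noteq> y"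
    and "\<exists>xs :: 'w \<Rightarrow> nat \<Rightarrow> 'h.
           (AE \<omega> in M. xs \<omega> 0 \<in> U_set \<theta> \<phi> A \<mu> \<alpha> \<beta> \<omega> - A \<omega> \<and>
                        backward_orbit \<theta> \<phi> A \<mu> \<beta> \<omega> (xs \<omega>)) \<and>
           (\<forall>n. random_point M (\<lambda>\<omega>. {xs \<omega> n}))"
  shows "\<not> synchronizes M \<theta> \<phi>"
proof
  assume "synchronizes M \<theta> \<phi>"
  then obtain A' where attractor: "weak_attractor M \<theta> \<phi> A'" and singleton: "AE \<omega> in M. \<exists>c. A' \<omega> = {c}"
    unfolding synchronizes_def by blast
  interpret random_dynamical_system M \<theta> F \<phi> by unfold_locales (rule assms(1))
  obtain a where a: "a \<in> borel_measurable M" "AE \<omega> in M. A \<omega> = {a \<omega>}"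
    using assms(2) by (rule random_point_measurable_selection)
  obtain xs where xs: "AE \<omega> in M. xs \<omega> 0 \<in> U_set \<theta> \<phi> A \<mu> \<alpha> \<beta> \<omega> - A \<omega> \<and>
      backward_orbit \<theta> \<phi> A \<mu> \<beta> \<omega> (xs \<omega>)"
    and xs_point: "\<And>n. random_point M (\<lambda>\<omega>. {xs \<omega> n})"
    using assms(9) by blast
  have xs_meas: "\<And>n. (\<lambda>\<omega>. xs \<omega> n) \<in> borel_measurable M"
    using xs_point by (rule random_point_singleton_measurable)
  have orbit: "AE \<omega> in M. backward_orbit \<theta> \<phi> A \<mu> \<beta> \<omega> (xs \<omega>)"
    using xs by (rule AE_mp) (simp add: AE_I2)
  have "AE \<omega> in M. xs \<omega> 0 \<in> A' \<omega>"
  proof (rule pullback_in_weak_attractor[OF attractor xs_meas xs_meas])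
    show "uniformly_tight M (\<lambda>t \<omega>. xs \<omega> t)"
      using assms(4) _ a xs_meas orbit by (rule uniformly_tight_backward_orbit) (use assms(7) in auto)
    show "AE \<omega> in M. \<phi> t (\<theta> (- int t) \<omega>) (xs \<omega> t) = xs \<omega> 0" for t
      using orbit AE_space by eventually_elim (rule backward_orbit_pullback)
  qed
  moreover have "AE \<omega> in M. a \<omega> \<in> A' \<omega>"
    using attractor measurable_compose[OF shift_measurable a(1)] a(1) uniformly_tight_shift[OF a(1)]
      invariant_point_pullback[OF assms(3) a(2)]
    by (rule pullback_in_weak_attractor)
  ultimately have "AE \<omega> in M. False"
    using singleton a(2) xs by eventually_elim (metis DiffD2 singletonD singletonI)
  then show False by simp
qed

end
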